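(* (a) The map $\Upsilon$ is a bijection from $\mathcal{D}$ to $\bar{\mathcal{D}}$. (b) $\theta_t(\bar{\mathcal{D}})\subseteq\bar{\mathcal{D}}$ for any $t\geq 0$. (c) $\Upsilon^{-1}\circ\theta_t\circ\Upsilon(\mathcal{D})\subseteq{\mathcal{D}}$ for any $t\geq 0$.
   Context: Fix $I\in\mathbb{N}$. $\mathcal{C}=\{f\in C(\mathbb{R}_+,\mathbb{R}_+):f(0)=0,f\text{ non-decreasing}\}$, $\mathcal{C}^\uparrow=\{f\in\mathcal{C}:f\text{ strictly increasing},\lim_{u\to\infty}f(u)=\infty\}$. For $\psi\in\mathcal{C}^I$, $\phi_i(u):=u-\sum_{j=1}^I2(i\wedge j)\psi_j(u)$. $\mathcal{F}:=\{\psi\in\mathcal{C}^I:\phi_I\in\mathcal{C}^\uparrow\}$; for $\psi\in\mathcal{F}$ each $\phi_i\in\mathcal{C}^\uparrow$ and $\Upsilon(\psi):=(\psi_i\circ\phi_i^{-1})_{i=1}^I$, which is a bijection $\mathcal{F}\to\mathcal{C}^I$ with inverse $\Upsilon^{-1}$. $\mathcal{D}:=\{\psi\in\mathcal{F}:\sum_{i=1}^Ii\sup_{u_1\ne u_2}\frac{\psi_i(u_1)-\psi_i(u_2)}{\phi_i(u_1)-\phi_i(u_2)}<\frac12\}$, $\bar{\mathcal{D}}:=\{\bar\psi\in\mathcal{C}^I:\sum_{i=1}^Ii\sup_{z_1\ne z_2}\frac{\bar\psi_i(z_1)-\bar\psi_i(z_2)}{z_1-z_2}<\frac12\}$. For $\bar\psi\in\mathcal{C}^I$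 and $t\ge0$, $(\theta_t\bar\psi)_i(z):=\bar\psi_i((z-it)\vee0)$. *)

theory Defs
  imports "HOL-Analysis.Analysis"
begin

text \<open>Functions R+ -> R+ are represented as real => real; only values on [0,inf) matter.
  The class C: f(0)=0, continuous, non-decreasing, non-negative on [0,inf).\<close>
definition Cfun :: "(real \<Rightarrow> real) \<Rightarrow> bool" where
  "Cfun f \<longleftrightarrow> f 0 = 0 \<and> continuous_on {0..} f \<and> mono_on {0..} f \<and> (\<forall>u\<ge>0. f u \<ge> 0)"

definition Cup :: "(real \<Rightarrow> real) \<Rightarrow> bool" where
  "Cup f \<longleftrightarrow> Cfun f \<and> strict_mono_on {0..} f \<and> filterlim f at_top at_top"

text \<open>C^I: tuples indexed by 1..I, in canonical (extensional) form: each component is 0 on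
  negative arguments, and components outside 1..I are identically 0.\<close>
definition CI :: "nat \<Rightarrow> (nat \<Rightarrow> real \<Rightarrow> real) set" where
  "CI I = {\<psi>. (\<forall>i\<in>{1..I}. Cfun (\<psi> i) \<and> (\<forall>u<0. \<psi> i u = 0)) \<and>
               (\<forall>i. i \<notin> {1..I} \<longrightarrow> \<psi> i = (\<lambda>_. 0))}"

definition phi :: "nat \<Rightarrow> (nat \<Rightarrow> real \<Rightarrow> real) \<Rightarrow> nat \<Rightarrow> real \<Rightarrow> real" where
  "phi I \<psi> i u = u - (\<Sum>j=1..I. 2 * real (min i j) * \<psi> j u)"

definition FF :: "nat \<Rightarrow> (nat \<Rightarrow> real \<Rightarrow> real) set" where
  "FF I = {\<psi>\<in>CI I. Cup (phi I \<psi> I)}"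

definition Ups :: "nat \<Rightarrow> (nat \<Rightarrow> real \<Rightarrow> real) \<Rightarrow> nat \<Rightarrow> real \<Rightarrow> real" where
  "Ups I \<psi> i z = (if i \<in> {1..I} \<and> 0 \<le> z
                    then \<psi> i (inv_into {0..} (phi I \<psi> i) z) else 0)"

definition DD :: "nat \<Rightarrow> (nat \<Rightarrow> real \<Rightarrow> real) set" where
  "DD I = {\<psi>\<in>FF I. (\<Sum>i=1..I. ereal (real i) *
      (SUP (u1,u2)\<in>{(u1,u2). 0 \<le> u1 \<and> 0 \<le> u2 \<and> u1 \<noteq> u2}.
          ereal ((\<psi> i u1 - \<psi> i u2) / (phi I \<psi> i u1 - phi I \<psi> i u2)))) < ereal (1/2)}"

definition DDbar :: "nat \<Rightarrow> (nat \<Rightarrow> real \<Rightarrow> real) set" where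
  "DDbar I = {\<psi>\<in>CI I. (\<Sum>i=1..I. ereal (real i) *
      (SUP (z1,z2)\<in>{(z1,z2). 0 \<le> z1 \<and> 0 \<le> z2 \<and> z1 \<noteq> z2}.
          ereal ((\<psi> i z1 - \<psi> i z2) / (z1 - z2)))) < ereal (1/2)}"

definition theta :: "real \<Rightarrow> (nat \<Rightarrow> real \<Rightarrow> real) \<Rightarrow> nat \<Rightarrow> real \<Rightarrow> real" where
  "theta t \<psi> i z = \<psi> i (max (z - real i * t) 0)"

end

theory Submission
  imports Defs
begin

(* For psi in F and f = Ups psi we have f_i o phi_i = psi_i on [0,inf), so the definition of
   phi becomes the system  phi_i(u) = u - sum_j 2 (i min j) f_j(phi_j(u)).  Subtracting the
   equation for i = I makes it triangular: phi_i = phi_I + 2 sum_{j>i} (j - i) f_j(phi_j), which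
   determines every phi_i from s = phi_I(u) by downward recursion, and then
   u = s + 2 sum_j j f_j(phi_j(u)) is a strictly increasing function of s with slope at least 1.
   Inverting it reconstructs psi from an arbitrary f in C^I, so Ups is a bijection F -> C^I.
   As phi_i is an increasing bijection of [0,inf), the supremum in the definition of D is the
   Lipschitz constant of f_i on [0,inf), so D is exactly the preimage of D-bar.  The shift
   theta_t precomposes each component with a 1-Lipschitz self-map of [0,inf) and therefore
   does not increase Lipschitz constants; (c) is (b) transported along the bijection. *)

section \<open>Restricting a bijection to a preimage\<close>

lemma bij_betw_preimage:
  assumes bij: "bij_betw f A B" and "B' \<subseteq> B"
  shows "bij_betw f {x \<in> A. f x \<in> B'} B'"
proof (rule bij_betw_subset[OF bij])
  show "{x \<in> A. f x \<in> B'} \<subseteq> A" by blast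
  have "B' \<subseteq> f ` A"
    using bij \<open>B' \<subseteq> B\<close> by (simp add: bij_betw_def)
  then show "f ` {x \<in> A. f x \<in> B'} = B'" by blast
qed

lemma the_inv_into_conjugate_image_subset:
  assumes bij: "bij_betw f A B" and "B' \<subseteq> B" and T: "T ` B' \<subseteq> B'"
  shows "(the_inv_into A f \<circ> T \<circ> f) ` {x \<in> A. f x \<in> B'} \<subseteq> {x \<in> A. f x \<in> B'}"
proof (rule image_subsetI)
  fix x assume "x \<in> {x \<in> A. f x \<in> B'}"
  then have y: "T (f x) \<in> B'" using T by blast
  moreover have "B' \<subseteq> f ` A" "inj_on f A"
    using bij \<open>B' \<subseteq> B\<close> by (simp_all add: bij_betw_def)
  ultimately have "the_inv_into A f (T (f x)) \<in> A" "f (the_inv_into A f (T (f x))) = T (f x)"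
    by (auto intro: the_inv_into_into f_the_inv_into_f)
  then show "(the_inv_into A f \<circ> T \<circ> f) x \<in> {x \<in> A. f x \<in> B'}"
    using y by simp
qed

section \<open>Increasing bijections of the half-line\<close>

lemma continuous_on_inv_into_strict_mono:
  fixes g :: "real \<Rightarrow> real"
  assumes mono: "strict_mono_on {0..} g" and onto: "g ` {0..} = {0..}"
  shows "continuous_on {0..} (inv_into {0..} g)"
  unfolding continuous_on_iff
proof (intro ballI allI impI)
  let ?h = "inv_into {0..} g"
  have h: "0 \<le> ?h y" "g (?h y) = y" if "0 \<le> y" for y
    using inv_into_into[of y g "{0..}"] f_inv_into_f[of y g "{0..}"] onto that by auto
  have less_iff: "g a < g b \<longleftrightarrow> a < b" if "0 \<le> a" "0 \<le> b" for a b
    using strict_mono_on_less[OF mono] that by simp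
  fix z e :: real
  assume "z \<in> {0..}" "0 < e"
  define u where "u = ?h z"
  have u: "0 \<le> u" "g u = z" using h \<open>z \<in> {0..}\<close> by (simp_all add: u_def)
  have up: "z < g (u + e)"
    using less_iff[of u "u + e"] u \<open>0 < e\<close> by simp
  have lo: "g (u - e) < z" if "e \<le> u"
    using less_iff[of "u - e" u] u \<open>0 < e\<close> that by simp
  define d where "d = min (g (u + e) - z) (if e \<le> u then z - g (u - e) else 1)"
  have "0 < d"
    using up lo by (simp add: d_def)
  moreover have "dist (?h y) (?h z) < e" if y: "0 \<le> y" "dist y z < d" for y
  proof -
    have "g (?h y) < g (u + e)"
      using y h(2)[OF y(1)] by (auto simp: d_def dist_real_def abs_less_iff)
    then have "?h y < u + e"
      using less_iff[OF h(1)[OF y(1)], of "u + e"] u(1) \<open>0 < e\<close> by simp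
    moreover have "u - e < ?h y"
    proof (cases "e \<le> u")
      case True
      then have "g (u - e) < g (?h y)"
        using y h(2)[OF y(1)] by (auto simp: d_def dist_real_def abs_less_iff)
      then show ?thesis
        using less_iff[OF _ h(1)[OF y(1)], of "u - e"] True by simp
    next
      case False
      then show ?thesis using h(1)[OF y(1)] by simp
    qed
    ultimately show ?thesis by (simp add: u_def[symmetric] dist_real_def abs_less_iff)
  qed
  ultimately show "\<exists>d>0. \<forall>y\<in>{0..}. dist y z < d \<longrightarrow> dist (?h y) (?h z) < e"
    by auto
qed

lemma Cup_intro:
  assumes "g 0 = 0" "continuous_on {0..} g" "strict_mono_on {0..} g" "filterlim g at_top at_top"
  shows "Cup g"
proof -
  have "mono_on {0..} g"
    using assms(3) by (rule strict_mono_on_imp_mono_on)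
  moreover have "0 \<le> g u" if "0 \<le> u" for u
    using mono_onD[OF \<open>mono_on {0..} g\<close>, of 0 u] that assms(1) by simp
  ultimately show ?thesis
    using assms by (simp add: Cup_def Cfun_def)
qed

lemma Cup_less_iff:
  assumes "Cup g" "0 \<le> u" "0 \<le> v"
  shows "g u < g v \<longleftrightarrow> u < v"
  using assms strict_mono_on_less[of "{0..}" g u v] by (simp add: Cup_def)

lemma Cup_le_iff:
  assumes "Cup g" "0 \<le> u" "0 \<le> v"
  shows "g u \<le> g v \<longleftrightarrow> u \<le> v"
  using Cup_less_iff[OF assms(1,3,2)] by (simp add: not_less[symmetric])

lemma Cup_image:
  assumes "Cup g"
  shows "g ` {0..} = {0..}"
proof
  show "g ` {0..} \<subseteq> {0..}"
    using assms by (auto simp: Cup_def Cfun_def)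
  show "{0..} \<subseteq> g ` {0..}"
  proof
    fix z :: real assume "z \<in> {0..}"
    have "eventually (\<lambda>x. z \<le> g x) at_top"
      using assms by (simp add: Cup_def filterlim_at_top)
    then obtain N where N: "\<And>x. N \<le> x \<Longrightarrow> z \<le> g x"
      by (auto simp: eventually_at_top_linorder)
    define b where "b = max N 0"
    have b: "0 \<le> b" "z \<le> g b"
      using N[of b] by (simp_all add: b_def)
    have "continuous_on {0..} g" "g 0 = 0"
      using assms by (simp_all add: Cup_def Cfun_def)
    then obtain x where "0 \<le> x" "g x = z"
      using IVT'[of g 0 z b] b \<open>z \<in> {0..}\<close> continuous_on_subset[of "{0..}" g "{0..b}"]
      by auto
    then show "z \<in> g ` {0..}" by force
  qed
qed

lemma Cup_inv_into:
  assumes "Cup g" "0 \<le> z"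
  shows "0 \<le> inv_into {0..} g z" "g (inv_into {0..} g z) = z"
  using inv_into_into[of z g "{0..}"] f_inv_into_f[of z g "{0..}"] Cup_image[OF assms(1)] assms(2)
  by auto

lemma Cup_inv_into_f:
  assumes "Cup g" "0 \<le> u"
  shows "inv_into {0..} g (g u) = u"
proof -
  have "inj_on g {0..}"
    using assms(1) strict_mono_on_imp_inj_on by (auto simp: Cup_def)
  then show ?thesis using assms(2) by (simp add: inv_into_f_f)
qed

lemma Cup_inv_into_Cup:
  assumes g: "Cup g"
  shows "Cup (inv_into {0..} g)"
proof (rule Cup_intro)
  let ?h = "inv_into {0..} g"
  note inv = Cup_inv_into[OF g]
  have less_iff: "?h x < ?h y \<longleftrightarrow> x < y" if "0 \<le> x" "0 \<le> y" for x y
    using Cup_less_iff[OF g inv(1)[OF that(1)] inv(1)[OF that(2)]] inv(2) that by simp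
  show "?h 0 = 0"
    using Cup_inv_into_f[OF g order.refl] g by (simp add: Cup_def Cfun_def)
  show "strict_mono_on {0..} ?h"
    using less_iff by (auto intro: strict_mono_onI)
  show "continuous_on {0..} ?h"
    using g Cup_image[OF g] by (intro continuous_on_inv_into_strict_mono) (simp_all add: Cup_def)
  show "filterlim ?h at_top at_top"
    unfolding filterlim_at_top
  proof
    fix Z :: real
    have "eventually (\<lambda>x. g (max Z 0) \<le> x) at_top"
      by (rule eventually_ge_at_top)
    then show "eventually (\<lambda>x. Z \<le> ?h x) at_top"
    proof (rule eventually_mono)
      fix x assume x: "g (max Z 0) \<le> x"
      have "0 \<le> g (max Z 0)" using g by (simp add: Cup_def Cfun_def)
      then have "0 \<le> x" using x by linarith
      have "g (max Z 0) \<le> g (?h x)" using inv(2)[OF \<open>0 \<le> x\<close>] x by simp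
      then have "max Z 0 \<le> ?h x"
        using Cup_le_iff[OF g _ inv(1)[OF \<open>0 \<le> x\<close>]] by simp
      then show "Z \<le> ?h x" by simp
    qed
  qed
qed

lemma Cup_cong:
  assumes g: "Cup g" and eq: "\<And>u. 0 \<le> u \<Longrightarrow> g u = h u"
  shows "Cup h"
proof (rule Cup_intro)
  show "h 0 = 0" using g eq[of 0] by (simp add: Cup_def Cfun_def)
  have "continuous_on {0..} g" using g by (simp add: Cup_def Cfun_def)
  then show "continuous_on {0..} h"
    by (rule continuous_on_cong[THEN iffD1, rotated 2]) (simp_all add: eq)
  have "strict_mono_on {0..} g" using g by (simp add: Cup_def)
  then show "strict_mono_on {0..} h"
    by (simp add: strict_mono_on_def eq)
  have "eventually (\<lambda>u. g u = h u) at_top"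
    using eventually_ge_at_top[of "0::real"] by (rule eventually_mono) (rule eq)
  moreover have "filterlim g at_top at_top" using g by (simp add: Cup_def)
  ultimately show "filterlim h at_top at_top"
    using filterlim_cong[OF refl refl, of g h at_top] by simp
qed

section \<open>Lipschitz constants on the half-line\<close>

definition slope_sup :: "(real \<Rightarrow> real) \<Rightarrow> ereal" where
  "slope_sup g = (SUP (z1, z2)\<in>{(z1, z2). 0 \<le> z1 \<and> 0 \<le> z2 \<and> z1 \<noteq> z2}.
     ereal ((g z1 - g z2) / (z1 - z2)))"

lemma mono_on_slope_nonneg:
  fixes g :: "real \<Rightarrow> real"
  assumes "mono_on S g" "a \<in> S" "b \<in> S"
  shows "0 \<le> (g a - g b) / (a - b)"
proof (cases "a \<le> b")
  case True
  then show ?thesis using mono_onD[OF assms] by (simp add: divide_nonpos_nonpos)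
next
  case False
  then show ?thesis using mono_onD[OF assms(1,3,2)] by (simp add: divide_nonneg_nonneg)
qed

lemma slope_sup_ge:
  assumes "0 \<le> z1" "0 \<le> z2" "z1 \<noteq> z2"
  shows "ereal ((g z1 - g z2) / (z1 - z2)) \<le> slope_sup g"
  unfolding slope_sup_def using assms by (intro SUP_upper2[of "(z1, z2)"]) auto

lemma slope_sup_nonneg:
  assumes "mono_on {0..} g"
  shows "0 \<le> slope_sup g"
  using order_trans[OF _ slope_sup_ge[of 1 0 g]] mono_on_slope_nonneg[OF assms, of 1 0]
  by (simp add: zero_ereal_def)

lemma slope_sup_reparam:
  assumes phi: "Cup \<phi>"
  shows "(SUP (u1, u2)\<in>{(u1, u2). 0 \<le> u1 \<and> 0 \<le> u2 \<and> u1 \<noteq> u2}.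
            ereal ((g (\<phi> u1) - g (\<phi> u2)) / (\<phi> u1 - \<phi> u2))) = slope_sup g"
proof -
  let ?P = "{(u1, u2). 0 \<le> (u1::real) \<and> 0 \<le> u2 \<and> u1 \<noteq> u2}"
  have "map_prod \<phi> \<phi> ` ?P = ?P"
  proof
    have "(\<phi> u1, \<phi> u2) \<in> ?P" if "(u1, u2) \<in> ?P" for u1 u2
    proof -
      have "\<phi> u1 \<noteq> \<phi> u2"
        using Cup_less_iff[OF phi, of u1 u2] Cup_less_iff[OF phi, of u2 u1] that
        by (auto simp: neq_iff)
      then show ?thesis
        using phi that by (simp add: Cup_def Cfun_def)
    qed
    then show "map_prod \<phi> \<phi> ` ?P \<subseteq> ?P" by auto
    show "?P \<subseteq> map_prod \<phi> \<phi> ` ?P"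
    proof (clarify)
      fix z1 z2 :: real assume z: "0 \<le> z1" "0 \<le> z2" "z1 \<noteq> z2"
      let ?v = "inv_into {0..} \<phi>"
      have "(?v z1, ?v z2) \<in> ?P" "(z1, z2) = map_prod \<phi> \<phi> (?v z1, ?v z2)"
        using Cup_inv_into[OF phi] z by (auto dest: arg_cong[of _ _ \<phi>])
      then show "(z1, z2) \<in> map_prod \<phi> \<phi> ` ?P" by (rule rev_image_eqI)
    qed
  qed
  define F where "F = (\<lambda>(z1, z2). ereal ((g z1 - g z2) / (z1 - z2)))"
  have "slope_sup g = Sup (F ` map_prod \<phi> \<phi> ` ?P)"
    unfolding slope_sup_def F_def using \<open>map_prod \<phi> \<phi> ` ?P = ?P\<close> by simp
  also have "\<dots> = Sup ((F \<circ> map_prod \<phi> \<phi>) ` ?P)"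
    by (simp add: image_comp)
  finally show ?thesis
    by (simp add: F_def comp_def case_prod_beta)
qed

lemma slope_sup_comp_contraction:
  assumes g: "mono_on {0..} g"
    and w: "\<And>z. 0 \<le> z \<Longrightarrow> 0 \<le> w z"
    and contr: "\<And>z1 z2. 0 \<le> z1 \<Longrightarrow> 0 \<le> z2 \<Longrightarrow> \<bar>w z1 - w z2\<bar> \<le> \<bar>z1 - z2\<bar>"
  shows "slope_sup (\<lambda>z. g (w z)) \<le> slope_sup g"
  unfolding slope_sup_def[of "\<lambda>z. g (w z)"]
proof (rule SUP_least, clarify)
  fix z1 z2 :: real assume z: "0 \<le> z1" "0 \<le> z2" "z1 \<noteq> z2"
  show "ereal ((g (w z1) - g (w z2)) / (z1 - z2)) \<le> slope_sup g"
  proof (cases "w z1 = w z2")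
    case True
    then show ?thesis using slope_sup_nonneg[OF g] by (simp add: zero_ereal_def[symmetric])
  next
    case False
    define q where "q = (g (w z1) - g (w z2)) / (w z1 - w z2)"
    have q: "0 \<le> q" "ereal q \<le> slope_sup g"
      using mono_on_slope_nonneg[OF g] slope_sup_ge[of "w z1" "w z2" g] w z False
      by (simp_all add: q_def)
    have "\<bar>(w z1 - w z2) / (z1 - z2)\<bar> \<le> 1"
      using contr[OF z(1,2)] z(3) by (simp add: abs_divide divide_le_eq_1)
    then have "(w z1 - w z2) / (z1 - z2) \<le> 1"
      by (rule order_trans[OF abs_ge_self])
    then have "q * ((w z1 - w z2) / (z1 - z2)) \<le> q"
      using mult_left_mono[OF _ q(1)] by fastforce
    moreover have "(g (w z1) - g (w z2)) / (z1 - z2) = q * ((w z1 - w z2) / (z1 - z2))"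
      using False by (simp add: q_def)
    ultimately show ?thesis using q(2) by (metis ereal_less_eq(3) order_trans)
  qed
qed

section \<open>The map Ups\<close>

lemma CI_intro:
  assumes zero: "\<And>i u. i \<notin> {1..I} \<or> u \<le> 0 \<Longrightarrow> f i u = 0"
    and cont: "\<And>i. i \<in> {1..I} \<Longrightarrow> continuous_on {0..} (f i)"
    and mono: "\<And>i. i \<in> {1..I} \<Longrightarrow> mono_on {0..} (f i)"
  shows "f \<in> CI I"
proof -
  have "0 \<le> f i u" if "i \<in> {1..I}" "0 \<le> u" for i u
    using mono_onD[OF mono[OF that(1)], of 0 u] zero[of i 0] that by simp
  then show ?thesis
    using assms by (auto simp: CI_def Cfun_def fun_eq_iff)
qed

lemma CI_nonpos:
  assumes "f \<in> CI I" "u \<le> 0"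
  shows "f i u = 0"
proof (cases "i \<in> {1..I}")
  case True
  then show ?thesis using assms by (cases "u = 0") (auto simp: CI_def Cfun_def)
next
  case False
  then show ?thesis using assms(1) by (simp add: CI_def)
qed

lemma CI_mono:
  assumes f: "f \<in> CI I"
  shows "mono (f i)"
proof (cases "i \<in> {1..I}")
  case True
  then have mono: "mono_on {0..} (f i)" and nonneg: "\<And>u. 0 \<le> u \<Longrightarrow> 0 \<le> f i u"
    using f by (auto simp: CI_def Cfun_def)
  show ?thesis
  proof (rule monoI)
    fix a b :: real assume "a \<le> b"
    show "f i a \<le> f i b"
    proof (cases "0 \<le> a")
      case True
      then show ?thesis using mono_onD[OF mono] \<open>a \<le> b\<close> by simp
    next
      case False
      then have "f i a = 0" by (simp add: CI_nonpos[OF f])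
      moreover have "0 \<le> f i b"
        using nonneg[of b] CI_nonpos[OF f, of b i] by (cases "0 \<le> b") simp_all
      ultimately show ?thesis by simp
    qed
  qed
next
  case False
  then show ?thesis using f by (auto simp: CI_def intro: monoI)
qed

lemma CI_nonneg:
  assumes "f \<in> CI I"
  shows "0 \<le> f i u"
  using monoD[OF CI_mono[OF assms], of "min u 0" u] CI_nonpos[OF assms, of "min u 0"] by simp

lemma CI_continuous:
  assumes f: "f \<in> CI I"
  shows "continuous_on UNIV (f i)"
proof (cases "i \<in> {1..I}")
  case True
  have "f i = (\<lambda>x. f i (max x 0))"
    using CI_nonpos[OF f] by (force simp: max_def)
  moreover have "continuous_on {0..} (f i)"
    using f True by (simp add: CI_def Cfun_def)
  then have "continuous_on UNIV (\<lambda>x. f i (max x 0))"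
    by (rule continuous_on_compose2) (auto intro: continuous_intros)
  ultimately show ?thesis by metis
next
  case False
  then show ?thesis using f by (simp add: CI_def)
qed

lemma phi_eq_phi_top:
  "phi I \<psi> i u = phi I \<psi> I u + 2 * (\<Sum>j=1..I. (real (min I j) - real (min i j)) * \<psi> j u)"
  unfolding phi_def by (simp add: sum_subtractf sum_distrib_left algebra_simps)

lemma FF_phi_Cup:
  assumes \<psi>: "\<psi> \<in> FF I" and i: "i \<in> {1..I}"
  shows "Cup (phi I \<psi> i)"
proof (rule Cup_intro)
  have CI: "\<psi> \<in> CI I" and top: "Cup (phi I \<psi> I)"
    using \<psi> by (auto simp: FF_def)
  define D where "D u = (\<Sum>j=1..I. (real (min I j) - real (min i j)) * \<psi> j u)" for u
  have phi_i: "phi I \<psi> i u = phi I \<psi> I u + 2 * D u" for u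
    unfolding D_def by (rule phi_eq_phi_top)
  have D_mono: "D u \<le> D v" if "u \<le> v" for u v
    unfolding D_def using i monoD[OF CI_mono[OF CI] that]
    by (intro sum_mono mult_left_mono) auto
  have D_nonneg: "0 \<le> D u" for u
    unfolding D_def using i CI_nonneg[OF CI] by (intro sum_nonneg mult_nonneg_nonneg) auto
  show "phi I \<psi> i 0 = 0"
    by (simp add: phi_def CI_nonpos[OF CI])
  have "continuous_on {0..} (\<psi> j)" for j
    using CI_continuous[OF CI] by (rule continuous_on_subset) simp
  then show "continuous_on {0..} (phi I \<psi> i)"
    unfolding phi_def by (intro continuous_intros)
  show "strict_mono_on {0..} (phi I \<psi> i)"
  proof (rule strict_mono_onI)
    fix r s :: real assume "r \<in> {0..}" "s \<in> {0..}" "r < s"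
    then show "phi I \<psi> i r < phi I \<psi> i s"
      using Cup_less_iff[OF top, of r s] D_mono[of r s] by (simp add: phi_i)
  qed
  have "filterlim (phi I \<psi> I) at_top at_top"
    using top by (simp add: Cup_def)
  moreover have "\<forall>\<^sub>F u in at_top. phi I \<psi> I u \<le> phi I \<psi> i u"
    using D_nonneg by (simp add: phi_i)
  ultimately show "filterlim (phi I \<psi> i) at_top at_top"
    by (rule filterlim_at_top_mono)
qed

lemma Ups_phi:
  assumes "\<psi> \<in> FF I" "i \<in> {1..I}" "0 \<le> u"
  shows "Ups I \<psi> i (phi I \<psi> i u) = \<psi> i u"
proof -
  note phi_i = FF_phi_Cup[OF assms(1,2)]
  have "0 \<le> phi I \<psi> i u"
    using phi_i assms(3) by (simp add: Cup_def Cfun_def)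
  then show ?thesis
    using assms(2) Cup_inv_into_f[OF phi_i assms(3)] by (simp add: Ups_def)
qed

lemma FF_Ups_CI:
  assumes \<psi>: "\<psi> \<in> FF I"
  shows "Ups I \<psi> \<in> CI I"
proof (rule CI_intro)
  have CI: "\<psi> \<in> CI I" using \<psi> by (simp add: FF_def)
  fix i assume i: "i \<in> {1..I}"
  let ?v = "inv_into {0..} (phi I \<psi> i)"
  have v: "Cup ?v" using Cup_inv_into_Cup[OF FF_phi_Cup[OF \<psi> i]] .
  have Ups_i: "Ups I \<psi> i z = \<psi> i (?v z)" if "0 \<le> z" for z
    using i that by (simp add: Ups_def)
  have "continuous_on {0..} (\<lambda>z. \<psi> i (?v z))"
    using v by (intro continuous_on_compose2[OF CI_continuous[OF CI]]) (auto simp: Cup_def Cfun_def)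
  then show "continuous_on {0..} (Ups I \<psi> i)"
    using continuous_on_cong[of "{0..}" "{0..}" "Ups I \<psi> i"] Ups_i by simp
  show "mono_on {0..} (Ups I \<psi> i)"
    using Cup_le_iff[OF v] monoD[OF CI_mono[OF CI]] by (intro mono_onI) (simp add: Ups_i)
next
  fix i and u :: real assume iu: "i \<notin> {1..I} \<or> u \<le> 0"
  show "Ups I \<psi> i u = 0"
  proof (cases "i \<in> {1..I} \<and> u = 0")
    case True
    then have "inv_into {0..} (phi I \<psi> i) 0 = 0"
      using Cup_inv_into_Cup[OF FF_phi_Cup[OF \<psi>]] by (simp add: Cup_def Cfun_def)
    then show ?thesis
      using True \<psi> by (auto simp: Ups_def FF_def CI_nonpos)
  next
    case False
    with iu show ?thesis by (auto simp: Ups_def)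
  qed
qed

section \<open>The inverse of Ups\<close>

(* If psi = Ups_inv I f and s = phi_I(u), then phi_rel I f i s = phi_i(u) and phiI_inv I f s = u. *)
function phi_rel :: "nat \<Rightarrow> (nat \<Rightarrow> real \<Rightarrow> real) \<Rightarrow> nat \<Rightarrow> real \<Rightarrow> real" where
  "phi_rel I f i s = s + 2 * (\<Sum>j\<in>{i<..I}. (real j - real i) * f j (phi_rel I f j s))"
  by pat_completeness auto
termination by (relation "Wellfounded.measure (\<lambda>(I, f, i, s). I - i)") auto

declare phi_rel.simps [simp del]

definition phiI_inv :: "nat \<Rightarrow> (nat \<Rightarrow> real \<Rightarrow> real) \<Rightarrow> real \<Rightarrow> real" where
  "phiI_inv I f s = s + 2 * (\<Sum>j=1..I. real j * f j (phi_rel I f j s))"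

lemma phi_rel_top: "phi_rel I f I s = s"
  by (subst phi_rel.simps) simp

lemma phi_rel_mono_diff:
  assumes mono: "\<And>j. mono (f j)" and "s \<le> s'"
  shows "s' - s \<le> phi_rel I f i s' - phi_rel I f i s"
proof (induction "I - i" arbitrary: i rule: less_induct)
  case less
  have "(real j - real i) * f j (phi_rel I f j s) \<le> (real j - real i) * f j (phi_rel I f j s')"
    if j: "j \<in> {i<..I}" for j
  proof -
    have "I - j < I - i" using j by auto
    then have "s' - s \<le> phi_rel I f j s' - phi_rel I f j s" by (rule less)
    then have "phi_rel I f j s \<le> phi_rel I f j s'" using \<open>s \<le> s'\<close> by linarith
    then show ?thesis
      using j monoD[OF mono] by (intro mult_left_mono) auto
  qed
  then have "(\<Sum>j\<in>{i<..I}. (real j - real i) * f j (phi_rel I f j s))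
      \<le> (\<Sum>j\<in>{i<..I}. (real j - real i) * f j (phi_rel I f j s'))"
    by (rule sum_mono)
  then show ?case by (subst (1 2) phi_rel.simps) linarith
qed

lemma phi_rel_mono:
  assumes "\<And>j. mono (f j)"
  shows "mono (phi_rel I f i)"
proof (rule monoI)
  fix s s' :: real assume "s \<le> s'"
  with phi_rel_mono_diff[of f, OF assms this, where I=I and i=i]
  show "phi_rel I f i s \<le> phi_rel I f i s'"
    by linarith
qed

lemma phiI_inv_mono_diff:
  assumes mono: "\<And>j. mono (f j)" and "s \<le> s'"
  shows "s' - s \<le> phiI_inv I f s' - phiI_inv I f s"
proof -
  have "(\<Sum>j=1..I. real j * f j (phi_rel I f j s)) \<le> (\<Sum>j=1..I. real j * f j (phi_rel I f j s'))"
  proof (intro sum_mono mult_left_mono)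
    fix j
    have "phi_rel I f j s \<le> phi_rel I f j s'"
      using monoD[OF phi_rel_mono[of f, OF mono] \<open>s \<le> s'\<close>] .
    then show "f j (phi_rel I f j s) \<le> f j (phi_rel I f j s')"
      using monoD[OF mono] by blast
  qed simp
  then show ?thesis by (simp add: phiI_inv_def)
qed

lemma phi_rel_zero:
  assumes "f \<in> CI I"
  shows "phi_rel I f i 0 = 0"
proof (induction "I - i" arbitrary: i rule: less_induct)
  case less
  then have "(\<Sum>j\<in>{i<..I}. (real j - real i) * f j (phi_rel I f j 0)) = 0"
    by (intro sum.neutral) (auto simp: CI_nonpos[OF assms])
  then show ?case by (subst phi_rel.simps) simp
qed

lemma phi_rel_continuous:
  assumes f: "f \<in> CI I"
  shows "continuous_on UNIV (phi_rel I f i)"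
proof (induction "I - i" arbitrary: i rule: less_induct)
  case less
  have "continuous_on UNIV (\<lambda>s. f j (phi_rel I f j s))" if "j \<in> {i<..I}" for j
    using less that by (intro continuous_on_compose2[OF CI_continuous[OF f]]) auto
  then have "continuous_on UNIV
      (\<lambda>s. s + 2 * (\<Sum>j\<in>{i<..I}. (real j - real i) * f j (phi_rel I f j s)))"
    by (intro continuous_intros) auto
  then show ?case by (subst phi_rel.simps[abs_def]) simp
qed

lemma phiI_inv_Cup:
  assumes f: "f \<in> CI I"
  shows "Cup (phiI_inv I f)"
proof (rule Cup_intro)
  have diff: "s' - s \<le> phiI_inv I f s' - phiI_inv I f s" if "s \<le> s'" for s s'
    using phiI_inv_mono_diff[of f, OF CI_mono[OF f] that] .
  show "phiI_inv I f 0 = 0"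
    by (simp add: phiI_inv_def phi_rel_zero[OF f] CI_nonpos[OF f])
  have "continuous_on UNIV (\<lambda>s. f j (phi_rel I f j s))" for j
    by (intro continuous_on_compose2[OF CI_continuous[OF f] phi_rel_continuous[OF f]]) auto
  then have "continuous_on UNIV (phiI_inv I f)"
    unfolding phiI_inv_def[abs_def] by (intro continuous_intros)
  then show "continuous_on {0..} (phiI_inv I f)"
    by (rule continuous_on_subset) simp
  show "strict_mono_on {0..} (phiI_inv I f)"
  proof (rule strict_mono_onI)
    fix r s :: real assume "r < s"
    with diff[of r s] show "phiI_inv I f r < phiI_inv I f s" by linarith
  qed
  have "\<forall>\<^sub>F s in at_top. s \<le> phiI_inv I f s"
    using eventually_ge_at_top[of "0::real"]
    by (rule eventually_mono) (use diff[of 0] \<open>phiI_inv I f 0 = 0\<close> in simp)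
  then show "filterlim (phiI_inv I f) at_top at_top"
    by (rule filterlim_at_top_mono[OF filterlim_ident])
qed

lemma sum_weights_minus_min:
  fixes a :: "nat \<Rightarrow> real"
  shows "s + 2 * (\<Sum>j=1..I. real j * a j) - (\<Sum>j=1..I. 2 * real (min i j) * a j)
     = s + 2 * (\<Sum>j\<in>{i<..I}. (real j - real i) * a j)"
proof -
  have "2 * (\<Sum>j=1..I. real j * a j) - (\<Sum>j=1..I. 2 * real (min i j) * a j)
      = 2 * (\<Sum>j=1..I. (real j - real (min i j)) * a j)"
    by (simp add: sum_distrib_left sum_subtractf[symmetric] algebra_simps)
  also have "(\<Sum>j=1..I. (real j - real (min i j)) * a j)
      = (\<Sum>j\<in>{i<..I}. (real j - real (min i j)) * a j)"
    by (intro sum.mono_neutral_right) auto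
  also have "\<dots> = (\<Sum>j\<in>{i<..I}. (real j - real i) * a j)"
    by (intro sum.cong) auto
  finally show ?thesis by simp
qed

lemma phiI_inv_minus_sum:
  "phiI_inv I f s - (\<Sum>j=1..I. 2 * real (min i j) * f j (phi_rel I f j s)) = phi_rel I f i s"
  unfolding phiI_inv_def sum_weights_minus_min by (subst (2) phi_rel.simps) simp

lemma phi_system_solution:
  assumes z: "\<And>i. i \<in> {1..I} \<Longrightarrow> z i = u - (\<Sum>j=1..I. 2 * real (min i j) * f j (z j))"
    and "1 \<le> I"
  shows "\<And>i. i \<in> {1..I} \<Longrightarrow> z i = phi_rel I f i (z I)" and "u = phiI_inv I f (z I)"
proof -
  have u: "u = z I + 2 * (\<Sum>j=1..I. real j * f j (z j))"
    using z[of I] \<open>1 \<le> I\<close> by (simp add: sum_distrib_left mult.assoc)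
  have z_diff: "z i = z I + 2 * (\<Sum>j\<in>{i<..I}. (real j - real i) * f j (z j))" if "i \<in> {1..I}" for i
  proof -
    have "z i = z I + 2 * (\<Sum>j=1..I. real j * f j (z j)) - (\<Sum>j=1..I. 2 * real (min i j) * f j (z j))"
      unfolding u[symmetric] by (rule z[OF that])
    then show ?thesis by (simp only: sum_weights_minus_min)
  qed
  show zi: "z i = phi_rel I f i (z I)" if "i \<in> {1..I}" for i
    using that
  proof (induction "I - i" arbitrary: i rule: less_induct)
    case less
    have "(\<Sum>j\<in>{i<..I}. (real j - real i) * f j (z j))
        = (\<Sum>j\<in>{i<..I}. (real j - real i) * f j (phi_rel I f j (z I)))"
    proof (rule sum.cong)
      fix j assume j: "j \<in> {i<..I}"
      have "z j = phi_rel I f j (z I)"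
        by (rule less.hyps) (use j less.prems in auto)
      then show "(real j - real i) * f j (z j) = (real j - real i) * f j (phi_rel I f j (z I))"
        by simp
    qed simp
    then show ?case
      using z_diff[OF less.prems] by (subst phi_rel.simps) simp
  qed
  have "(\<Sum>j=1..I. real j * f j (z j)) = (\<Sum>j=1..I. real j * f j (phi_rel I f j (z I)))"
  proof (rule sum.cong)
    fix j assume "j \<in> {1..I}"
    then show "real j * f j (z j) = real j * f j (phi_rel I f j (z I))"
      using zi[of j] by simp
  qed simp
  then show "u = phiI_inv I f (z I)"
    using u by (simp add: phiI_inv_def)
qed

definition Ups_inv :: "nat \<Rightarrow> (nat \<Rightarrow> real \<Rightarrow> real) \<Rightarrow> nat \<Rightarrow> real \<Rightarrow> real" where
  "Ups_inv I f i u =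
     (if i \<in> {1..I} \<and> 0 \<le> u then f i (phi_rel I f i (inv_into {0..} (phiI_inv I f) u)) else 0)"

lemma phi_Ups_inv:
  assumes f: "f \<in> CI I" and u: "0 \<le> u"
  shows "phi I (Ups_inv I f) i u = phi_rel I f i (inv_into {0..} (phiI_inv I f) u)"
proof -
  let ?s = "inv_into {0..} (phiI_inv I f) u"
  have "(\<Sum>j=1..I. 2 * real (min i j) * Ups_inv I f j u)
      = (\<Sum>j=1..I. 2 * real (min i j) * f j (phi_rel I f j ?s))"
    using u by (intro sum.cong) (simp_all add: Ups_inv_def)
  then have "phi I (Ups_inv I f) i u
      = phiI_inv I f ?s - (\<Sum>j=1..I. 2 * real (min i j) * f j (phi_rel I f j ?s))"
    using Cup_inv_into(2)[OF phiI_inv_Cup[OF f] u] by (simp add: phi_def)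
  then show ?thesis by (simp only: phiI_inv_minus_sum)
qed

lemma Ups_inv_FF:
  assumes f: "f \<in> CI I"
  shows "Ups_inv I f \<in> FF I"
proof -
  let ?v = "inv_into {0..} (phiI_inv I f)"
  have v: "Cup ?v"
    using Cup_inv_into_Cup[OF phiI_inv_Cup[OF f]] .
  have "Ups_inv I f \<in> CI I"
  proof (rule CI_intro)
    fix i and u :: real assume "i \<notin> {1..I} \<or> u \<le> 0"
    moreover have "?v 0 = 0" using v by (simp add: Cup_def Cfun_def)
    ultimately show "Ups_inv I f i u = 0"
      by (auto simp: Ups_inv_def phi_rel_zero[OF f] CI_nonpos[OF f])
  next
    fix i assume i: "i \<in> {1..I}"
    have Ups_inv_i: "Ups_inv I f i u = f i (phi_rel I f i (?v u))" if "0 \<le> u" for u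
      using i that by (simp add: Ups_inv_def)
    have "continuous_on {0..} (\<lambda>u. phi_rel I f i (?v u))"
      using v by (intro continuous_on_compose2[OF phi_rel_continuous[OF f]]) (auto simp: Cup_def Cfun_def)
    then have "continuous_on {0..} (\<lambda>u. f i (phi_rel I f i (?v u)))"
      by (rule continuous_on_compose2[OF CI_continuous[OF f]]) simp
    then show "continuous_on {0..} (Ups_inv I f i)"
      using continuous_on_cong[of "{0..}" "{0..}" "Ups_inv I f i"] Ups_inv_i by simp
    show "mono_on {0..} (Ups_inv I f i)"
    proof (rule mono_onI)
      fix r s :: real assume "r \<in> {0..}" "s \<in> {0..}" "r \<le> s"
      then have "?v r \<le> ?v s" using Cup_le_iff[OF v] by simp
      then have "f i (phi_rel I f i (?v r)) \<le> f i (phi_rel I f i (?v s))"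
        using monoD[OF CI_mono[OF f] monoD[OF phi_rel_mono[of f, OF CI_mono[OF f]]]] by blast
      then show "Ups_inv I f i r \<le> Ups_inv I f i s"
        using \<open>r \<in> {0..}\<close> \<open>s \<in> {0..}\<close> by (simp add: Ups_inv_i)
    qed
  qed
  moreover have "Cup (phi I (Ups_inv I f) I)"
    by (rule Cup_cong[OF v]) (simp add: phi_Ups_inv[OF f] phi_rel_top)
  ultimately show ?thesis by (simp add: FF_def)
qed

lemma Ups_Ups_inv:
  assumes f: "f \<in> CI I"
  shows "Ups I (Ups_inv I f) = f"
proof (intro ext)
  fix i and z :: real
  show "Ups I (Ups_inv I f) i z = f i z"
  proof (cases "i \<in> {1..I} \<and> 0 \<le> z")
    case True
    let ?\<phi> = "phi I (Ups_inv I f) i"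
    let ?u = "inv_into {0..} ?\<phi> z"
    have u: "0 \<le> ?u" "?\<phi> ?u = z"
      using Cup_inv_into[OF FF_phi_Cup[OF Ups_inv_FF[OF f]]] True by auto
    have "Ups I (Ups_inv I f) i z = Ups_inv I f i ?u"
      using True by (simp add: Ups_def)
    also have "\<dots> = f i (?\<phi> ?u)"
      using True u(1) by (simp add: Ups_inv_def phi_Ups_inv[OF f])
    finally show ?thesis by (simp only: u(2))
  next
    case False
    then show ?thesis
      using f CI_nonpos[OF f, of z i] by (auto simp: Ups_def CI_def)
  qed
qed

lemma Ups_inv_Ups:
  assumes \<psi>: "\<psi> \<in> FF I"
  shows "Ups_inv I (Ups I \<psi>) = \<psi>"
proof (intro ext)
  fix i and u :: real
  let ?f = "Ups I \<psi>"
  show "Ups_inv I ?f i u = \<psi> i u"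
  proof (cases "i \<in> {1..I} \<and> 0 \<le> u")
    case True
    then have i: "i \<in> {1..I}" and u: "0 \<le> u" and "1 \<le> I" by auto
    have f: "?f \<in> CI I" using FF_Ups_CI[OF \<psi>] .
    have "phi I \<psi> k u = u - (\<Sum>j=1..I. 2 * real (min k j) * ?f j (phi I \<psi> j u))" for k
      unfolding phi_def[of I \<psi> k u] using Ups_phi[OF \<psi> _ u]
      by (intro arg_cong2[where f=minus] sum.cong) simp_all
    note sol = phi_system_solution[where z="\<lambda>k. phi I \<psi> k u" and f="?f" and I=I and u=u,
      OF this \<open>1 \<le> I\<close>]
    have "0 \<le> phi I \<psi> I u"
      using FF_phi_Cup[OF \<psi>, of I] \<open>1 \<le> I\<close> u by (simp add: Cup_def Cfun_def)
    then have "inv_into {0..} (phiI_inv I ?f) u = phi I \<psi> I u"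
      using Cup_inv_into_f[OF phiI_inv_Cup[OF f]] sol(2) by metis
    then have "Ups_inv I ?f i u = ?f i (phi I \<psi> i u)"
      using i u sol(1)[OF i] by (simp add: Ups_inv_def)
    then show ?thesis
      using Ups_phi[OF \<psi> i u] by simp
  next
    case False
    then show ?thesis
      using \<psi> CI_nonpos[of \<psi> I u i] by (auto simp: Ups_inv_def FF_def CI_def)
  qed
qed

lemma bij_betw_Ups: "bij_betw (Ups I) (FF I) (CI I)"
  by (rule bij_betw_byWitness[where f'="Ups_inv I"])
     (auto simp: Ups_inv_Ups Ups_Ups_inv FF_Ups_CI Ups_inv_FF)

section \<open>The sets D and D-bar and the shift theta\<close>

lemma DDbar_iff:
  "f \<in> DDbar I \<longleftrightarrow> f \<in> CI I \<and> (\<Sum>i=1..I. ereal (real i) * slope_sup (f i)) < ereal (1/2)"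
  by (simp add: DDbar_def slope_sup_def)

lemma SUP_phi_eq_slope_sup:
  assumes \<psi>: "\<psi> \<in> FF I" and i: "i \<in> {1..I}"
  shows "(SUP (u1, u2)\<in>{(u1, u2). 0 \<le> u1 \<and> 0 \<le> u2 \<and> u1 \<noteq> u2}.
            ereal ((\<psi> i u1 - \<psi> i u2) / (phi I \<psi> i u1 - phi I \<psi> i u2)))
       = slope_sup (Ups I \<psi> i)"
proof -
  let ?\<phi> = "phi I \<psi> i"
  have "(SUP (u1, u2)\<in>{(u1, u2). 0 \<le> u1 \<and> 0 \<le> u2 \<and> u1 \<noteq> u2}.
            ereal ((\<psi> i u1 - \<psi> i u2) / (?\<phi> u1 - ?\<phi> u2)))
      = (SUP (u1, u2)\<in>{(u1, u2). 0 \<le> u1 \<and> 0 \<le> u2 \<and> u1 \<noteq> u2}.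
            ereal ((Ups I \<psi> i (?\<phi> u1) - Ups I \<psi> i (?\<phi> u2)) / (?\<phi> u1 - ?\<phi> u2)))"
    using Ups_phi[OF \<psi> i] by (intro SUP_cong) auto
  also have "\<dots> = slope_sup (Ups I \<psi> i)"
    by (rule slope_sup_reparam[OF FF_phi_Cup[OF \<psi> i]])
  finally show ?thesis .
qed

lemma DD_eq_preimage: "DD I = {\<psi> \<in> FF I. Ups I \<psi> \<in> DDbar I}"
proof -
  have "(\<Sum>i=1..I. ereal (real i) *
          (SUP (u1, u2)\<in>{(u1, u2). 0 \<le> u1 \<and> 0 \<le> u2 \<and> u1 \<noteq> u2}.
            ereal ((\<psi> i u1 - \<psi> i u2) / (phi I \<psi> i u1 - phi I \<psi> i u2))))
      = (\<Sum>i=1..I. ereal (real i) * slope_sup (Ups I \<psi> i))" if "\<psi> \<in> FF I" for \<psi>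
    using SUP_phi_eq_slope_sup[OF that] by (intro sum.cong) simp_all
  then show ?thesis
    using FF_Ups_CI by (auto simp: DD_def DDbar_iff)
qed

lemma theta_CI:
  assumes f: "f \<in> CI I" and t: "0 \<le> t"
  shows "theta t f \<in> CI I"
proof (rule CI_intro)
  fix i and u :: real assume "i \<notin> {1..I} \<or> u \<le> 0"
  then show "theta t f i u = 0"
  proof
    assume "i \<notin> {1..I}"
    then show ?thesis using f by (simp add: theta_def CI_def)
  next
    assume "u \<le> 0"
    moreover have "0 \<le> real i * t" using t by simp
    ultimately have "max (u - real i * t) 0 = 0" by simp
    then show ?thesis by (simp add: theta_def CI_nonpos[OF f])
  qed
next
  fix i
  have "continuous_on UNIV (\<lambda>z. max (z - real i * t) (0::real))"
    by (intro continuous_intros)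
  then have "continuous_on UNIV (\<lambda>z. f i (max (z - real i * t) 0))"
    by (rule continuous_on_compose2[OF CI_continuous[OF f]]) simp
  then show "continuous_on {0..} (theta t f i)"
    unfolding theta_def[abs_def] by (rule continuous_on_subset) simp
  show "mono_on {0..} (theta t f i)"
    using monoD[OF CI_mono[OF f]] by (intro mono_onI) (simp add: theta_def)
qed

lemma theta_DDbar:
  assumes f: "f \<in> DDbar I" and t: "0 \<le> t"
  shows "theta t f \<in> DDbar I"
proof -
  have CI: "f \<in> CI I" using f by (simp add: DDbar_iff)
  have "slope_sup (theta t f i) \<le> slope_sup (f i)" for i
  proof -
    have "theta t f i = (\<lambda>z. f i (max (z - real i * t) 0))"
      by (simp add: theta_def fun_eq_iff)
    moreover have "mono_on {0..} (f i)"
      using CI_mono[OF CI] by (simp add: mono_on_def monoD)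
    moreover have "\<bar>max (z1 - c) 0 - max (z2 - c) 0\<bar> \<le> \<bar>z1 - z2\<bar>" for z1 z2 c :: real
      by (simp add: max_def abs_if)
    ultimately show ?thesis
      using slope_sup_comp_contraction[of "f i" "\<lambda>z. max (z - real i * t) 0"] by simp
  qed
  then have "(\<Sum>i=1..I. ereal (real i) * slope_sup (theta t f i))
      \<le> (\<Sum>i=1..I. ereal (real i) * slope_sup (f i))"
    by (intro sum_mono ereal_mult_left_mono) simp_all
  then show ?thesis
    using f theta_CI[OF CI t] unfolding DDbar_iff by (meson order.strict_trans1)
qed

theorem proposition3p8:
  fixes I :: nat
  shows "bij_betw (Ups I) (DD I) (DDbar I) \<and>
         (\<forall>t\<ge>0. theta t ` DDbar I \<subseteq> DDbar I) \<and>
         (\<forall>t\<ge>0. (the_inv_into (FF I) (Ups I) \<circ> theta t \<circ> Ups I) ` DD I \<subseteq> DD I)"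
proof (intro conjI allI impI)
  have DDbar_CI: "DDbar I \<subseteq> CI I"
    by (auto simp: DDbar_def)
  show "bij_betw (Ups I) (DD I) (DDbar I)"
    unfolding DD_eq_preimage by (rule bij_betw_preimage[OF bij_betw_Ups DDbar_CI])
  fix t :: real assume "0 \<le> t"
  show theta: "theta t ` DDbar I \<subseteq> DDbar I"
    using theta_DDbar[OF _ \<open>0 \<le> t\<close>] by blast
  show "(the_inv_into (FF I) (Ups I) \<circ> theta t \<circ> Ups I) ` DD I \<subseteq> DD I"
    unfolding DD_eq_preimage
    by (rule the_inv_into_conjugate_image_subset[OF bij_betw_Ups DDbar_CI theta])
qed

end
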